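(* Consider the following RSS-based localization setting. A stationary target is at an unknown position $\mathbf{s}=(x,y,0)\in\mathbb{R}^3$. There are $N$ UAVs; UAV $i$ ($1\le i\le N$) takes $M_i\ge 1$ measurements, the $j$-th one at position $\mathbf{u}_{i,j}=(x_{i,j},y_{i,j},h_{i,j})$. Let $r_{i,j}=\sqrt{(x-x_{i,j})^2+(y-y_{i,j})^2}$, $d_{i,j}=\sqrt{r_{i,j}^2+h_{i,j}^2}$, and let $\beta_{i,j}$ be the horizontal UAV–target angle, i.e. $(x_{i,j}-x,\,y_{i,j}-y)=r_{i,j}(\cos\beta_{i,j},\sin\beta_{i,j})$, with $\mathbf{g}_{i,j}=(\cos\beta_{i,j},\sin\beta_{i,j})^T$. The $j$-th measurement of UAV $i$ is $R_{i,j}=p_0-10\gamma\log_{10}(d_{i,j})+\eta_{i,j}$ with known $p_0$, $\gamma>0$ and independent noises $\eta_{i,j}\sim\mathcal{N}(0,\sigma_i^2)$, $\sigma_i>0$. The Fisher information matrix for $(x,y)$ is $$\mathbf{F}=\Big(\frac{10\gamma}{\ln 10}\Big)^2\sum_{i=1}^N\sum_{j=1}^{M_i}\sigma_i^{-2}\frac{r_{i,j}^2}{d_{i,j}^4}\mathbf{g}_{i,j}\mathbf{g}_{i,j}^T.$$ A configuration is feasible if $r_{i,j}\ge r_0$, $h_{i,j}\ge h_0$ for all $i,j$, and $\|\mathbf{u}_{i,j}-\mathbf{u}_{i,j-1}\|\le t_0c_{\max}$ for $2\le j\le M_i$, where $r_0,h_0,t_0>0$, $c_{\max}\ge 0$ are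 given. Problem P is to maximize $\det\mathbf{F}$ over feasible configurations. Assume the UAVs hover, i.e. $c_{\max}=0$, so $\mathbf{u}_{i,j}=\mathbf{u}_i$ (and $r_{i,j}=r_i$, $h_{i,j}=h_i$, $\mathbf{g}_{i,j}=\mathbf{g}_i$) for all $j$. Let $t$ be an index with $M_t\sigma_t^{-2}=\max\{M_i\sigma_i^{-2}:1\le i\le N\}$ and let $r^*=\max\{r_0,h_0\}$. If $M_t\sigma_t^{-2}>\frac12\sum_{i=1}^N M_i\sigma_i^{-2}$, then any configuration satisfying $r_i=r^*$ and $h_i=h_0$ for all $i$, together with $\mathbf{g}_t^T\mathbf{g}_i=0$ for all $i\ne t$, is an optimal solution of problem P.
   Context: The optimization is over UAV positions for a given target position $\mathbf{s}$. *)

theory Defs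
  imports "HOL-Analysis.Analysis"
begin

definition hdist :: "real^3 \<Rightarrow> real^3 \<Rightarrow> real" where
  "hdist s u = sqrt ((s$1 - u$1)\<^sup>2 + (s$2 - u$2)\<^sup>2)"

definition height :: "real^3 \<Rightarrow> real" where
  "height u = u$3"

definition dist3 :: "real^3 \<Rightarrow> real^3 \<Rightarrow> real" where
  "dist3 s u = sqrt ((hdist s u)\<^sup>2 + (height u)\<^sup>2)"

definition gdir :: "real^3 \<Rightarrow> real^3 \<Rightarrow> real^2" where
  "gdir s u = vector [(u$1 - s$1) / hdist s u, (u$2 - s$2) / hdist s u]"

definition outer2 :: "real^2 \<Rightarrow> real^2 \<Rightarrow> real^2^2" where
  "outer2 a b = (\<chi> k l. a$k * b$l)"

definition FIM :: "real \<Rightarrow> nat \<Rightarrow> (nat \<Rightarrow> nat) \<Rightarrow> (nat \<Rightarrow> real) \<Rightarrow> real^3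
    \<Rightarrow> (nat \<Rightarrow> nat \<Rightarrow> real^3) \<Rightarrow> real^2^2" where
  "FIM \<gamma> N M \<sigma> s u =
     ((10 * \<gamma> / ln 10)\<^sup>2) *\<^sub>R
     (\<Sum>i\<in>{1..N}. \<Sum>j\<in>{1..M i}.
        (inverse ((\<sigma> i)\<^sup>2) * (hdist s (u i j))\<^sup>2 / (dist3 s (u i j)) ^ 4)
          *\<^sub>R outer2 (gdir s (u i j)) (gdir s (u i j)))"

definition feasible :: "nat \<Rightarrow> (nat \<Rightarrow> nat) \<Rightarrow> real \<Rightarrow> real \<Rightarrow> real \<Rightarrow> real
    \<Rightarrow> real^3 \<Rightarrow> (nat \<Rightarrow> nat \<Rightarrow> real^3) \<Rightarrow> bool" where
  "feasible N M r0 h0 t0 cmax s u \<longleftrightarrow>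
     (\<forall>i\<in>{1..N}. \<forall>j\<in>{1..M i}. hdist s (u i j) \<ge> r0 \<and> height (u i j) \<ge> h0) \<and>
     (\<forall>i\<in>{1..N}. \<forall>j\<in>{2..M i}. norm (u i j - u i (j - 1)) \<le> t0 * cmax)"

end

theory Submission
  imports Defs
begin

(* With c_max = 0 every UAV hovers at one point, so F = sum_i c_i g_i g_i^T with
   c_i = K M_i sigma_i^-2 r_i^2 / d_i^4, and each gain r^2 / (r^2 + h^2)^2 is largest at r = r*,
   h = h0. In the orthonormal frame (g_t, g_t^perp), det F <= P Q where P + Q = sum_i c_i and
   Q = sum_i c_i (g_t^perp . g_i)^2 <= sum_{i ~= t} c_i, which the dominance of UAV t keeps below
   half of the bound for P + Q. Since x (S - x) increases for x <= S/2, det F is at most the value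
   attained when all gains are maximal and every g_i with i ~= t is orthogonal to g_t. *)

definition perp2 :: "real^2 \<Rightarrow> real^2" where
  "perp2 p = vector [- p$2, p$1]"

lemma inner_perp2_self: "perp2 p \<bullet> p = 0"
  by (simp add: perp2_def inner_vec_def sum_2)

lemma inner_sq_add_inner_perp2_sq:
  "(p \<bullet> g)\<^sup>2 + (perp2 p \<bullet> g)\<^sup>2 = (norm p)\<^sup>2 * (norm g)\<^sup>2"
  unfolding power2_norm_eq_inner
  by (simp add: perp2_def inner_vec_def sum_2 power2_eq_square algebra_simps)

(* The left-hand side is det (R^T A R) for R = (p | perp2 p), and det R = (norm p)^2. *)
lemma det2_in_perp2_frame:
  fixes A :: "real^2^2"
  shows "(p \<bullet> (A *v p)) * (perp2 p \<bullet> (A *v perp2 p)) - (p \<bullet> (A *v perp2 p)) * (perp2 p \<bullet> (A *v p))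
       = (norm p) ^ 4 * det A"
proof -
  have "(norm p) ^ 4 = ((norm p)\<^sup>2)\<^sup>2"
    by simp
  also have "\<dots> = (p$1 * p$1 + p$2 * p$2)\<^sup>2"
    by (simp only: power2_norm_eq_inner) (simp add: inner_vec_def sum_2)
  finally have "(norm p) ^ 4 = (p$1 * p$1 + p$2 * p$2)\<^sup>2" .
  then show ?thesis
    by (simp add: det_2 perp2_def inner_vec_def matrix_vector_mult_def sum_2 power2_eq_square algebra_simps)
qed

lemma inner_sum_outer2:
  "x \<bullet> ((\<Sum>i\<in>I. c i *\<^sub>R outer2 (g i) (g i)) *v y) = (\<Sum>i\<in>I. c i * (x \<bullet> g i) * (g i \<bullet> y))"
  by (simp add: inner_vec_def matrix_vector_mult_def outer2_def sum_2
      sum_distrib_left sum_distrib_right sum.distrib algebra_simps)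

lemma det_sum_outer2:
  fixes g :: "'i \<Rightarrow> real^2"
  assumes "norm p = 1"
  shows "det (\<Sum>i\<in>I. c i *\<^sub>R outer2 (g i) (g i))
       = (\<Sum>i\<in>I. c i * (p \<bullet> g i)\<^sup>2) * (\<Sum>i\<in>I. c i * (perp2 p \<bullet> g i)\<^sup>2)
         - (\<Sum>i\<in>I. c i * (p \<bullet> g i) * (perp2 p \<bullet> g i))\<^sup>2"
  using det2_in_perp2_frame[of p "\<Sum>i\<in>I. c i *\<^sub>R outer2 (g i) (g i)"] assms
  by (simp add: inner_sum_outer2 inner_commute power2_eq_square ac_simps)

lemma mult_le_of_add_le_half:
  fixes p q r s :: real
  assumes "0 \<le> q" "q \<le> r" "p + q \<le> s" "2 * r \<le> s"
  shows "p * q \<le> r * (s - r)"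
proof -
  have "p * q \<le> (s - q) * q"
    using assms by (intro mult_right_mono) auto
  also have "\<dots> \<le> r * (s - r)"
  proof -
    have "r * (s - r) - (s - q) * q = (r - q) * (s - r - q)"
      by (simp add: algebra_simps)
    also have "\<dots> \<ge> 0"
      using assms by (intro mult_nonneg_nonneg) auto
    finally show ?thesis by simp
  qed
  finally show ?thesis .
qed

lemma det_sum_outer2_le:
  fixes g :: "'i \<Rightarrow> real^2" and c w :: "'i \<Rightarrow> real"
  assumes "finite I" "t \<in> I" and unit: "\<forall>i\<in>I. norm (g i) = 1"
    and c: "\<forall>i\<in>I. 0 \<le> c i \<and> c i \<le> F * w i" and "0 \<le> F" and "sum w I \<le> 2 * w t"
  shows "det (\<Sum>i\<in>I. c i *\<^sub>R outer2 (g i) (g i)) \<le> F\<^sup>2 * w t * (sum w I - w t)"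
proof -
  define p where "p = g t"
  define P where "P = (\<Sum>i\<in>I. c i * (p \<bullet> g i)\<^sup>2)"
  define Q where "Q = (\<Sum>i\<in>I. c i * (perp2 p \<bullet> g i)\<^sup>2)"
  have p: "norm p = 1"
    using unit \<open>t \<in> I\<close> by (simp add: p_def)
  have split: "(p \<bullet> g i)\<^sup>2 + (perp2 p \<bullet> g i)\<^sup>2 = 1" if "i \<in> I" for i
    using that unit p by (simp add: inner_sq_add_inner_perp2_sq)
  have "det (\<Sum>i\<in>I. c i *\<^sub>R outer2 (g i) (g i)) \<le> P * Q"
    unfolding det_sum_outer2[OF p] P_def Q_def by simp
  also have "P * Q \<le> (F * (sum w I - w t)) * (F * sum w I - F * (sum w I - w t))"
  proof (rule mult_le_of_add_le_half)
    show "0 \<le> Q"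
      unfolding Q_def using c by (auto intro!: sum_nonneg)
    have "Q = (\<Sum>i\<in>I - {t}. c i * (perp2 p \<bullet> g i)\<^sup>2)"
      unfolding Q_def using \<open>finite I\<close> \<open>t \<in> I\<close>
      by (simp add: sum.remove p_def inner_perp2_self)
    also have "\<dots> \<le> (\<Sum>i\<in>I - {t}. F * w i)"
    proof (rule sum_mono)
      fix i assume i: "i \<in> I - {t}"
      have "(perp2 p \<bullet> g i)\<^sup>2 \<le> (p \<bullet> g i)\<^sup>2 + (perp2 p \<bullet> g i)\<^sup>2"
        by simp
      also have "\<dots> = 1"
        using split i by simp
      finally have "(perp2 p \<bullet> g i)\<^sup>2 \<le> 1" .
      then have "c i * (perp2 p \<bullet> g i)\<^sup>2 \<le> c i"
        using c i by (simp add: mult_left_le)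
      also have "\<dots> \<le> F * w i"
        using c i by simp
      finally show "c i * (perp2 p \<bullet> g i)\<^sup>2 \<le> F * w i" .
    qed
    also have "\<dots> = F * (sum w I - w t)"
      using \<open>finite I\<close> \<open>t \<in> I\<close> by (simp add: sum_distrib_left[symmetric] sum_diff1)
    finally show "Q \<le> F * (sum w I - w t)" .
    have "P + Q = sum c I"
      unfolding P_def Q_def sum.distrib[symmetric] using split
      by (simp add: distrib_left[symmetric])
    also have "\<dots> \<le> F * sum w I"
      using c by (simp add: sum_distrib_left sum_mono)
    finally show "P + Q \<le> F * sum w I" .
    show "2 * (F * (sum w I - w t)) \<le> F * sum w I"
      using \<open>0 \<le> F\<close> \<open>sum w I \<le> 2 * w t\<close> by (simp add: mult_left_mono algebra_simps)
  qed
  also have "\<dots> = F\<^sup>2 * w t * (sum w I - w t)"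
    by (simp add: power2_eq_square algebra_simps)
  finally show ?thesis .
qed

lemma det_sum_outer2_orthogonal:
  fixes g :: "'i \<Rightarrow> real^2"
  assumes "finite I" "t \<in> I" and unit: "\<forall>i\<in>I. norm (g i) = 1"
    and orth: "\<forall>i\<in>I - {t}. g t \<bullet> g i = 0"
  shows "det (\<Sum>i\<in>I. c i *\<^sub>R outer2 (g i) (g i)) = c t * sum c (I - {t})"
proof -
  define p where "p = g t"
  have p: "norm p = 1"
    using unit \<open>t \<in> I\<close> by (simp add: p_def)
  have perp: "(perp2 p \<bullet> g i)\<^sup>2 = 1" if "i \<in> I - {t}" for i
    using that unit orth p inner_sq_add_inner_perp2_sq[of p "g i"] by (simp add: p_def)
  have P: "(\<Sum>i\<in>I. c i * (p \<bullet> g i)\<^sup>2) = c t"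
    using \<open>finite I\<close> \<open>t \<in> I\<close> orth p
    by (simp add: sum.remove p_def dot_square_norm)
  have Q: "(\<Sum>i\<in>I. c i * (perp2 p \<bullet> g i)\<^sup>2) = sum c (I - {t})"
    using \<open>finite I\<close> \<open>t \<in> I\<close> perp by (simp add: sum.remove p_def inner_perp2_self)
  have cross: "(\<Sum>i\<in>I. c i * (p \<bullet> g i) * (perp2 p \<bullet> g i)) = 0"
    using orth by (intro sum.neutral) (auto simp: p_def inner_perp2_self)
  show ?thesis
    unfolding det_sum_outer2[OF p] P Q cross by simp
qed

lemma div_square_add_le_max:
  fixes a x0 x :: real
  assumes "0 < a" "0 < x0" "x0 \<le> x"
  shows "x / (x + a)\<^sup>2 \<le> max x0 a / (max x0 a + a)\<^sup>2"
proof -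
  define X where "X = max x0 a"
  have "(x - X) * (a\<^sup>2 - x * X) \<le> 0"
  proof (cases "a \<le> x0")
    case True
    then have "a\<^sup>2 \<le> x * X"
      using assms by (simp add: X_def power2_eq_square mult_mono)
    then show ?thesis
      using True assms by (simp add: X_def mult_nonneg_nonpos)
  next
    case False
    then have "(x - X) * (a\<^sup>2 - x * X) = - a * (x - a)\<^sup>2"
      by (simp add: X_def power2_eq_square algebra_simps)
    then show ?thesis
      using assms by simp
  qed
  moreover have "x * (X + a)\<^sup>2 - X * (x + a)\<^sup>2 = (x - X) * (a\<^sup>2 - x * X)"
    by (simp add: power2_eq_square algebra_simps)
  moreover have "0 < x + a" "0 < X + a"
    using assms by (auto simp: X_def)
  ultimately show ?thesis
    unfolding X_def[symmetric] by (simp add: divide_simps)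
qed

definition fisher_gain :: "real^3 \<Rightarrow> real^3 \<Rightarrow> real" where
  "fisher_gain s u = (hdist s u)\<^sup>2 / dist3 s u ^ 4"

definition optimal_gain :: "real \<Rightarrow> real \<Rightarrow> real" where
  "optimal_gain r0 h0 = (max r0 h0)\<^sup>2 / ((max r0 h0)\<^sup>2 + h0\<^sup>2)\<^sup>2"

definition info_weight :: "(nat \<Rightarrow> nat) \<Rightarrow> (nat \<Rightarrow> real) \<Rightarrow> nat \<Rightarrow> real" where
  "info_weight M \<sigma> i = real (M i) / (\<sigma> i)\<^sup>2"

lemma fisher_gain_eq: "fisher_gain s u = (hdist s u)\<^sup>2 / ((hdist s u)\<^sup>2 + (height u)\<^sup>2)\<^sup>2"
proof -
  have "dist3 s u ^ 4 = ((dist3 s u)\<^sup>2)\<^sup>2"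
    by simp
  then show ?thesis
    by (simp add: fisher_gain_def dist3_def)
qed

lemma fisher_gain_le:
  assumes "0 < r0" "0 < h0" "r0 \<le> hdist s u" "h0 \<le> height u"
  shows "fisher_gain s u \<le> optimal_gain r0 h0"
proof -
  define r where "r = hdist s u"
  have "r\<^sup>2 + h0\<^sup>2 \<le> r\<^sup>2 + (height u)\<^sup>2"
    using assms by (simp add: power_mono)
  then have "fisher_gain s u \<le> r\<^sup>2 / (r\<^sup>2 + h0\<^sup>2)\<^sup>2"
    using assms unfolding fisher_gain_eq r_def[symmetric]
    by (intro divide_left_mono power_mono mult_pos_pos) auto
  also have "\<dots> \<le> max (r0\<^sup>2) (h0\<^sup>2) / (max (r0\<^sup>2) (h0\<^sup>2) + h0\<^sup>2)\<^sup>2"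
    using assms by (intro div_square_add_le_max) (auto simp: r_def power_mono)
  also have "max (r0\<^sup>2) (h0\<^sup>2) = (max r0 h0)\<^sup>2"
    using assms by (simp add: max_def power_mono_iff)
  finally show ?thesis
    unfolding optimal_gain_def .
qed

lemma gdir_norm:
  assumes "0 < hdist s u"
  shows "norm (gdir s u) = 1"
proof -
  have "gdir s u \<bullet> gdir s u = ((u$1 - s$1)\<^sup>2 + (u$2 - s$2)\<^sup>2) / (hdist s u)\<^sup>2"
    by (simp add: gdir_def inner_vec_def sum_2 add_divide_distrib power2_eq_square)
  also have "(u$1 - s$1)\<^sup>2 + (u$2 - s$2)\<^sup>2 = (hdist s u)\<^sup>2"
    by (simp add: hdist_def power2_commute)
  finally have "gdir s u \<bullet> gdir s u = 1"
    using assms by simp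
  then show ?thesis
    by (simp add: norm_eq_1)
qed

lemma eq_first_if_successive_eq:
  fixes f :: "nat \<Rightarrow> 'a"
  assumes "\<forall>k\<in>{2..n}. f k = f (k - 1)" "j \<in> {1..n}"
  shows "f j = f 1"
  using assms(2)
proof (induction j)
  case (Suc j)
  show ?case
  proof (cases "j = 0")
    case False
    then have "Suc j \<in> {2..n}"
      using Suc.prems by auto
    then have "f (Suc j) = f j"
      using assms(1) by (metis diff_Suc_1)
    also have "f j = f 1"
      using False Suc by simp
    finally show ?thesis .
  qed simp
qed simp

lemma feasible_hovering:
  assumes "feasible N M r0 h0 t0 0 s u" "i \<in> {1..N}" "j \<in> {1..M i}"
  shows "u i j = u i 1"
  using assms by (intro eq_first_if_successive_eq[where n = "M i"]) (auto simp: feasible_def)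

lemma FIM_hovering:
  assumes "\<And>i j. i \<in> {1..N} \<Longrightarrow> j \<in> {1..M i} \<Longrightarrow> u i j = u i 1"
  shows "FIM \<gamma> N M \<sigma> s u = (\<Sum>i\<in>{1..N}.
           ((10 * \<gamma> / ln 10)\<^sup>2 * info_weight M \<sigma> i * fisher_gain s (u i 1))
             *\<^sub>R outer2 (gdir s (u i 1)) (gdir s (u i 1)))"
  unfolding FIM_def scaleR_sum_right[where A = "{1..N}"]
proof (rule sum.cong)
  fix i assume i: "i \<in> {1..N}"
  have "(\<Sum>j\<in>{1..M i}. f (u i j)) = real (M i) *\<^sub>R f (u i 1)" for f :: "real^3 \<Rightarrow> real^2^2"
  proof -
    have "(\<Sum>j\<in>{1..M i}. f (u i j)) = (\<Sum>j\<in>{1..M i}. f (u i 1))"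
      by (intro sum.cong refl arg_cong[where f = f] assms[OF i])
    then show ?thesis
      by (simp del: sum_constant add: sum_constant_scaleR)
  qed
  from this[of "\<lambda>v. (inverse ((\<sigma> i)\<^sup>2) * (hdist s v)\<^sup>2 / dist3 s v ^ 4) *\<^sub>R outer2 (gdir s v) (gdir s v)"]
  show "(10 * \<gamma> / ln 10)\<^sup>2 *\<^sub>R (\<Sum>j\<in>{1..M i}. (inverse ((\<sigma> i)\<^sup>2) * (hdist s (u i j))\<^sup>2 / dist3 s (u i j) ^ 4)
          *\<^sub>R outer2 (gdir s (u i j)) (gdir s (u i j)))
      = ((10 * \<gamma> / ln 10)\<^sup>2 * info_weight M \<sigma> i * fisher_gain s (u i 1))
          *\<^sub>R outer2 (gdir s (u i 1)) (gdir s (u i 1))"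
    by (simp add: fisher_gain_def info_weight_def divide_inverse ac_simps)
qed simp

lemma det_FIM_hovering_orthogonal:
  assumes "0 < r0" "t \<in> {1..N}"
    and "\<forall>i\<in>{1..N}. hdist s (v i) = max r0 h0" "\<forall>i\<in>{1..N}. height (v i) = h0"
    and "\<forall>i\<in>{1..N}. i \<noteq> t \<longrightarrow> gdir s (v t) \<bullet> gdir s (v i) = 0"
  shows "det (FIM \<gamma> N M \<sigma> s (\<lambda>i j. v i))
       = ((10 * \<gamma> / ln 10)\<^sup>2 * optimal_gain r0 h0)\<^sup>2 * info_weight M \<sigma> t
         * ((\<Sum>i\<in>{1..N}. info_weight M \<sigma> i) - info_weight M \<sigma> t)"
proof -
  define C where "C = (10 * \<gamma> / ln 10)\<^sup>2 * optimal_gain r0 h0"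
  define c where "c i = C * info_weight M \<sigma> i" for i
  have "FIM \<gamma> N M \<sigma> s (\<lambda>i j. v i) = (\<Sum>i\<in>{1..N}. c i *\<^sub>R outer2 (gdir s (v i)) (gdir s (v i)))"
    unfolding FIM_hovering[of N M "\<lambda>i j. v i", OF refl] using assms(3,4)
    by (intro sum.cong) (simp_all add: c_def C_def fisher_gain_eq optimal_gain_def)
  also have "det \<dots> = c t * sum c ({1..N} - {t})"
    using assms by (intro det_sum_outer2_orthogonal) (auto intro: gdir_norm)
  also have "\<dots> = C\<^sup>2 * info_weight M \<sigma> t * ((\<Sum>i\<in>{1..N}. info_weight M \<sigma> i) - info_weight M \<sigma> t)"
    using \<open>t \<in> {1..N}\<close> by (simp add: c_def sum_distrib_left[symmetric] sum_diff1 power2_eq_square)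
  finally show ?thesis
    unfolding C_def .
qed

lemma det_FIM_hovering_le:
  assumes "feasible N M r0 h0 t0 0 s u" "\<forall>i\<in>{1..N}. 1 \<le> M i" "0 < r0" "0 < h0" "t \<in> {1..N}"
    and "(\<Sum>i\<in>{1..N}. info_weight M \<sigma> i) \<le> 2 * info_weight M \<sigma> t"
  shows "det (FIM \<gamma> N M \<sigma> s u)
       \<le> ((10 * \<gamma> / ln 10)\<^sup>2 * optimal_gain r0 h0)\<^sup>2 * info_weight M \<sigma> t
         * ((\<Sum>i\<in>{1..N}. info_weight M \<sigma> i) - info_weight M \<sigma> t)"
proof -
  define K where "K = (10 * \<gamma> / ln 10)\<^sup>2"
  define c where "c i = K * info_weight M \<sigma> i * fisher_gain s (u i 1)" for i
  have bounds: "r0 \<le> hdist s (u i 1) \<and> h0 \<le> height (u i 1)" if "i \<in> {1..N}" for i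
    using assms(1,2) that by (auto simp: feasible_def)
  have gain: "0 \<le> fisher_gain s (u i 1) \<and> fisher_gain s (u i 1) \<le> optimal_gain r0 h0"
    if "i \<in> {1..N}" for i
    using fisher_gain_le[of r0 h0 s "u i 1"] bounds[OF that] assms(3,4) by (simp add: fisher_gain_def)
  have unit: "norm (gdir s (u i 1)) = 1" if "i \<in> {1..N}" for i
    using bounds[OF that] \<open>0 < r0\<close> by (intro gdir_norm) linarith
  have c: "0 \<le> c i \<and> c i \<le> K * optimal_gain r0 h0 * info_weight M \<sigma> i" if "i \<in> {1..N}" for i
  proof -
    have w: "0 \<le> K * info_weight M \<sigma> i"
      by (simp add: K_def info_weight_def)
    have "0 \<le> c i"
      unfolding c_def using w gain[OF that] by simp
    moreover have "c i \<le> K * info_weight M \<sigma> i * optimal_gain r0 h0"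
      unfolding c_def using w gain[OF that] by (simp add: mult_left_mono)
    ultimately show ?thesis
      by (simp add: ac_simps)
  qed
  have "FIM \<gamma> N M \<sigma> s u = (\<Sum>i\<in>{1..N}. c i *\<^sub>R outer2 (gdir s (u i 1)) (gdir s (u i 1)))"
    unfolding c_def K_def using feasible_hovering[OF assms(1)] by (rule FIM_hovering)
  also have "det \<dots> \<le> (K * optimal_gain r0 h0)\<^sup>2 * info_weight M \<sigma> t
                       * ((\<Sum>i\<in>{1..N}. info_weight M \<sigma> i) - info_weight M \<sigma> t)"
    using unit c gain[OF \<open>t \<in> {1..N}\<close>] assms(5,6)
    by (intro det_sum_outer2_le) (auto simp: K_def)
  finally show ?thesis
    unfolding K_def .
qed

theorem theorem4:
  fixes N :: nat and M :: "nat \<Rightarrow> nat" and \<sigma> :: "nat \<Rightarrow> real"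
    and \<gamma> r0 h0 t0 :: real and s :: "real^3" and t :: nat
    and v :: "nat \<Rightarrow> real^3"
  assumes "\<forall>i\<in>{1..N}. M i \<ge> 1"
    and "\<forall>i\<in>{1..N}. \<sigma> i > 0"
    and "\<gamma> > 0" and "r0 > 0" and "h0 > 0" and "t0 > 0"
    and "s$3 = 0"
    and "t \<in> {1..N}"
    and "\<forall>i\<in>{1..N}. real (M i) / (\<sigma> i)\<^sup>2 \<le> real (M t) / (\<sigma> t)\<^sup>2"
    and "real (M t) / (\<sigma> t)\<^sup>2 > (1/2) * (\<Sum>i\<in>{1..N}. real (M i) / (\<sigma> i)\<^sup>2)"
    and "\<forall>i\<in>{1..N}. hdist s (v i) = max r0 h0"
    and "\<forall>i\<in>{1..N}. height (v i) = h0"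
    and "\<forall>i\<in>{1..N}. i \<noteq> t \<longrightarrow> gdir s (v t) \<bullet> gdir s (v i) = 0"
  shows "feasible N M r0 h0 t0 0 s (\<lambda>i j. v i) \<and>
         (\<forall>u. feasible N M r0 h0 t0 0 s u \<longrightarrow>
              det (FIM \<gamma> N M \<sigma> s u) \<le> det (FIM \<gamma> N M \<sigma> s (\<lambda>i j. v i)))"
proof -
  have dominant: "(\<Sum>i\<in>{1..N}. info_weight M \<sigma> i) \<le> 2 * info_weight M \<sigma> t"
    using assms(10) unfolding info_weight_def by linarith
  have "feasible N M r0 h0 t0 0 s (\<lambda>i j. v i)"
    using assms(11,12) by (simp add: feasible_def)
  then show ?thesis
    using det_FIM_hovering_le[OF _ assms(1,4,5,8) dominant]
      det_FIM_hovering_orthogonal[OF assms(4,8,11,12,13)]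
    by simp
qed

end
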